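(* Let $k$ be a field of characteristic zero, $D_2 = k_{+}\{x\}/[x^2]$, and $(D_2)_{id}$ the algebra obtained from $D_2$ by externally adjoining a unity. Let $f(t_1,\dots,t_n)$ be a nonzero differential polynomial in the variables $t_1,\dots,t_n$ with coefficients in $(D_2)_{id}$. Then there exist $a_1,\dots,a_n\in D_2$ such that $f(a_1,\dots,a_n)\neq 0$.
   Context: $k\{x\}$ denotes the differential polynomial algebra in one indeterminate: the polynomial algebra $k[x_0,x_1,x_2,\dots]$ (with $x=x_0$) with the $k$-linear derivation satisfying $x_n' = x_{n+1}$. $k_{+}\{x\}$ is its subalgebra (without unity) of differential polynomials with zero constant term; $[x^2]$ is the differential ideal (ideal closed under the derivation) of $k_{+}\{x\}$ generated by $x^2$; $D_2$ carries the induced derivation, extended to $(D_2)_{id} = k\cdot 1\oplus D_2$ by $1' = 0$. A differential polynomial in $t_1,\dots,t_n$ with coefficients in $(D_2)_{id}$ is an element of the polynomial ring $(D_2)_{id}[t_{i,j} : 1\le i\le n,\ j\ge 0]$ (where $t_{i,j}$ stands for the $j$-th derivative of $t_i$); $f(a_1,\dots,a_n)$ denotes the element of $(D_2)_{id}$ obtained by substituting $t_{i,j}\mapsto a_i^{(j)}$. *)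

theory Defs
  imports Main "HOL-Library.Poly_Mapping"
begin

(* The differential polynomial algebra k{x} = k[x_0,x_1,...]: finitely supported
  maps from monomials (exponent vectors nat \<Rightarrow>\<^sub>0 nat) to coefficients. *)
type_synonym 'k dpoly = "(nat \<Rightarrow>\<^sub>0 nat) \<Rightarrow>\<^sub>0 'k"

(* The variable x_j (j-th derivative of x). *)
definition dvar :: "nat \<Rightarrow> 'k::comm_ring_1 dpoly" where
  "dvar j = Poly_Mapping.single (Poly_Mapping.single j 1) 1"

definition dconst :: "'k::comm_ring_1 \<Rightarrow> 'k dpoly" where
  "dconst c = Poly_Mapping.single 0 c"

(* The k-linear derivation with x_n' = x_{n+1} (Leibniz rule on monomials). *)
definition dderiv :: "'k::comm_ring_1 dpoly \<Rightarrow> 'k dpoly" where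
  "dderiv p = (\<Sum>m\<in>Poly_Mapping.keys p. \<Sum>i\<in>Poly_Mapping.keys (m::nat \<Rightarrow>\<^sub>0 nat).
      Poly_Mapping.single (m - Poly_Mapping.single i 1 + Poly_Mapping.single (Suc i) 1)
        (Poly_Mapping.lookup p m * of_nat (Poly_Mapping.lookup m i)))"

definition kplus :: "'k::comm_ring_1 dpoly set" where
  "kplus = {p. Poly_Mapping.lookup p 0 = 0}"

(* [x^2]: the differential ideal of the (non-unital) algebra k_+{x} generated by x^2. *)
inductive_set dideal_x2 :: "'k::comm_ring_1 dpoly set" where
  gen: "dvar 0 * dvar 0 \<in> dideal_x2"
| zero: "0 \<in> dideal_x2"
| add: "p \<in> dideal_x2 \<Longrightarrow> q \<in> dideal_x2 \<Longrightarrow> p + q \<in> dideal_x2"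
| smult: "p \<in> dideal_x2 \<Longrightarrow> dconst c * p \<in> dideal_x2"
| mult: "p \<in> dideal_x2 \<Longrightarrow> q \<in> kplus \<Longrightarrow> q * p \<in> dideal_x2"
| deriv: "p \<in> dideal_x2 \<Longrightarrow> dderiv p \<in> dideal_x2"

(* Elements of (D_2)_id = k\<cdot>1 \<oplus> D_2 are represented by polynomials in k{x}
  (c + q with q \<in> k_+{x}), two representatives being equal iff their difference lies in [x^2].
  Elements of D_2 are those represented by elements of k_+{x}. *)
definition D2_zero :: "'k::comm_ring_1 dpoly \<Rightarrow> bool" where
  "D2_zero p \<longleftrightarrow> p \<in> dideal_x2"

(* Differential polynomials in t_1..t_n over (D_2)_id: polynomials in variables t_{i,j}
  (index (i,j)), coefficients given by representatives in k{x}. *)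
type_synonym 'k dpoly_over = "((nat \<times> nat) \<Rightarrow>\<^sub>0 nat) \<Rightarrow>\<^sub>0 'k dpoly"

(* Substitution t_{i,j} \<mapsto> a_i^{(j)}, computed on representatives. *)
definition deval :: "'k::comm_ring_1 dpoly_over \<Rightarrow> (nat \<Rightarrow> 'k dpoly) \<Rightarrow> 'k dpoly" where
  "deval f a = (\<Sum>m\<in>Poly_Mapping.keys f. Poly_Mapping.lookup f m *
      (\<Prod>v\<in>Poly_Mapping.keys m. ((dderiv ^^ snd v) (a (fst v))) ^ Poly_Mapping.lookup m v))"

end

theory Submission
  imports Defs "HOL-Computational_Algebra.Polynomial"
begin

text \<open>Substitute \<open>t\<^sub>i \<mapsto> x\<^sub>N\<^sub>i\<close> for a large \<open>N\<close>. Then \<open>f(a) = \<Sum> c\<^sub>m X\<^sub>m\<close>, where the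
  coefficients \<open>c\<^sub>m\<close>, not all in \<open>[x\<^sup>2]\<close>, involve only variables \<open>x\<^sub>i\<close> with small \<open>i\<close>, and the
  pairwise distinct monomials \<open>X\<^sub>m\<close> only variables \<open>x\<^sub>i\<close> with \<open>i \<ge> N\<close>. If \<open>p \<in> [x\<^sup>2]\<close> has total
  degree at most \<open>D\<close> and every variable \<open>x\<^sub>i\<close> of \<open>p\<close> with \<open>i < K\<close> satisfies \<open>i + D \<le> K\<close>, then
  \<open>K! \<partial>p/\<partial>x\<^sub>K \<in> [x\<^sup>2]\<close>. Differentiating by the lowest variable occurring in the \<open>X\<^sub>m\<close> and
  inducting on their total degree therefore isolates a single \<open>c\<^sub>m \<notin> [x\<^sup>2]\<close>.

  For the differentiation step, \<open>[x\<^sup>2]\<close> is the ideal generated by the \<open>q\<^sub>n = (x\<^sup>2)\<^sup>(\<^sup>n\<^sup>)\<close>, and the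
  substitution \<open>x\<^sub>i \<mapsto> x\<^sub>i - i x\<^sub>i\<^sub>-\<^sub>1 z\<close> sends each \<open>q\<^sub>n\<close> into \<open>[x\<^sup>2][z]\<close>. The \<open>z\<^sup>K\<close>-coefficient of
  \<open>\<Sum>\<^sub>j\<^sub>\<le>\<^sub>K j! z\<^sup>j (\<partial>p/\<partial>x\<^sub>j)(x\<^sub>i - i x\<^sub>i\<^sub>-\<^sub>1 z)\<close> then lies in \<open>[x\<^sup>2]\<close>, and the degree and
  gap conditions reduce it to \<open>K! \<partial>p/\<partial>x\<^sub>K\<close>.\<close>

abbreviation dmonom :: "(nat \<Rightarrow>\<^sub>0 nat) \<Rightarrow> 'k::comm_ring_1 dpoly" where
  "dmonom m \<equiv> Poly_Mapping.single m 1"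

lemma sum_single_lookup_superset:
  fixes p :: "'a \<Rightarrow>\<^sub>0 'b::comm_monoid_add"
  assumes "finite A" "Poly_Mapping.keys p \<subseteq> A"
  shows "p = (\<Sum>m\<in>A. Poly_Mapping.single m (Poly_Mapping.lookup p m))"
proof (rule poly_mapping_eqI)
  fix k
  have "(\<Sum>m\<in>A. Poly_Mapping.lookup (Poly_Mapping.single m (Poly_Mapping.lookup p m)) k)
      = (\<Sum>m\<in>A. if m = k then Poly_Mapping.lookup p m else 0)"
    by (rule sum.cong) (auto simp: lookup_single when_def)
  also have "\<dots> = Poly_Mapping.lookup p k"
    using assms by (auto simp: sum.delta in_keys_iff)
  finally show "Poly_Mapping.lookup p k
      = Poly_Mapping.lookup (\<Sum>m\<in>A. Poly_Mapping.single m (Poly_Mapping.lookup p m)) k"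
    by (simp add: lookup_sum)
qed

lemma sum_single_lookup:
  fixes p :: "'a \<Rightarrow>\<^sub>0 'b::comm_monoid_add"
  shows "p = (\<Sum>m\<in>Poly_Mapping.keys p. Poly_Mapping.single m (Poly_Mapping.lookup p m))"
  by (rule sum_single_lookup_superset) auto

lemma dconst_add: "dconst (a + b) = dconst a + (dconst b :: 'k::comm_ring_1 dpoly)"
  by (simp add: dconst_def single_add)

lemma dconst_mult: "dconst (a * b) = dconst a * (dconst b :: 'k::comm_ring_1 dpoly)"
  by (simp add: dconst_def mult_single)

lemma dconst_0 [simp]: "dconst 0 = (0 :: 'k::comm_ring_1 dpoly)"
  by (simp add: dconst_def)

lemma dconst_1 [simp]: "dconst 1 = (1 :: 'k::comm_ring_1 dpoly)"
  by (simp add: dconst_def)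

lemma of_nat_eq_dconst: "(of_nat n :: 'k::comm_ring_1 dpoly) = dconst (of_nat n)"
  by (simp add: dconst_def)

lemma single_eq_dconst_mult:
  "Poly_Mapping.single m c = dconst c * (dmonom m :: 'k::comm_ring_1 dpoly)"
  by (simp add: dconst_def mult_single)

lemma sum_dconst_mult_dmonom_superset:
  fixes p :: "'k::comm_ring_1 dpoly"
  assumes "finite A" "Poly_Mapping.keys p \<subseteq> A"
  shows "p = (\<Sum>m\<in>A. dconst (Poly_Mapping.lookup p m) * dmonom m)"
proof -
  have "p = (\<Sum>m\<in>A. Poly_Mapping.single m (Poly_Mapping.lookup p m))"
    by (rule sum_single_lookup_superset[OF assms])
  also have "\<dots> = (\<Sum>m\<in>A. dconst (Poly_Mapping.lookup p m) * dmonom m)"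
    by (rule sum.cong[OF refl], rule single_eq_dconst_mult)
  finally show ?thesis .
qed

lemma mult_eq_sum_single:
  fixes p q :: "'k::comm_ring_1 dpoly"
  assumes "finite A" "Poly_Mapping.keys p \<subseteq> A" "finite B" "Poly_Mapping.keys q \<subseteq> B"
  shows "p * q = (\<Sum>a\<in>A. \<Sum>b\<in>B.
    Poly_Mapping.single (a + b) (Poly_Mapping.lookup p a * Poly_Mapping.lookup q b))"
proof -
  have "p * q = (\<Sum>a\<in>A. Poly_Mapping.single a (Poly_Mapping.lookup p a))
      * (\<Sum>b\<in>B. Poly_Mapping.single b (Poly_Mapping.lookup q b))"
    by (rule arg_cong2[where f = "(*)",
          OF sum_single_lookup_superset[OF assms(1,2)] sum_single_lookup_superset[OF assms(3,4)]])
  then show ?thesis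
    unfolding sum_product by (simp only: mult_single)
qed

lemma keys_dconst_mult: "Poly_Mapping.keys (dconst a * c :: 'k::comm_ring_1 dpoly) \<subseteq> Poly_Mapping.keys c"
proof
  fix m assume "m \<in> Poly_Mapping.keys (dconst a * c)"
  then obtain x y where "m = x + y" "x \<in> Poly_Mapping.keys (dconst a :: 'k dpoly)" "y \<in> Poly_Mapping.keys c"
    using keys_mult[of "dconst a" c] by blast
  then show "m \<in> Poly_Mapping.keys c" by (auto simp: dconst_def split: if_splits)
qed

lemma keys_mult_dmonom:
  "Poly_Mapping.keys (c * dmonom h :: 'k::comm_ring_1 dpoly) \<subseteq> (\<lambda>m. m + h) ` Poly_Mapping.keys c"
proof
  fix M assume "M \<in> Poly_Mapping.keys (c * dmonom h)"
  then obtain x y where "M = x + y" "x \<in> Poly_Mapping.keys c" "y \<in> Poly_Mapping.keys (dmonom h :: 'k dpoly)"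
    using keys_mult[of c "dmonom h"] by blast
  then show "M \<in> (\<lambda>m. m + h) ` Poly_Mapping.keys c" by auto
qed

lemma dvar_power: "dvar i ^ e = (dmonom (Poly_Mapping.single i e) :: 'k::comm_ring_1 dpoly)"
  by (induction e) (auto simp: dvar_def mult_single single_add[symmetric] mult.commute)

lemma prod_dmonom:
  "finite A \<Longrightarrow> (\<Prod>i\<in>A. (dmonom (f i) :: 'k::comm_ring_1 dpoly)) = dmonom (\<Sum>i\<in>A. f i)"
  by (induction A rule: finite_induct) (auto simp: mult_single)

lemma dmonom_eq_prod_dvar:
  "dmonom m = (\<Prod>i\<in>Poly_Mapping.keys m. (dvar i ^ Poly_Mapping.lookup m i :: 'k::comm_ring_1 dpoly))"
proof -
  have "(\<Prod>i\<in>Poly_Mapping.keys m. (dvar i ^ Poly_Mapping.lookup m i :: 'k dpoly))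
      = dmonom (\<Sum>i\<in>Poly_Mapping.keys m. Poly_Mapping.single i (Poly_Mapping.lookup m i))"
    by (simp add: dvar_power prod_dmonom)
  also have "(\<Sum>i\<in>Poly_Mapping.keys m. Poly_Mapping.single i (Poly_Mapping.lookup m i)) = m"
    by (rule sum_single_lookup[symmetric])
  finally show ?thesis by simp
qed

lemma dvar_in_kplus: "dvar j \<in> kplus"
proof -
  have "Poly_Mapping.lookup (Poly_Mapping.single j (1::nat)) j \<noteq> Poly_Mapping.lookup 0 j"
    by simp
  then have "Poly_Mapping.single j (1::nat) \<noteq> 0"
    by metis
  then show ?thesis by (simp add: kplus_def dvar_def lookup_single when_def)
qed


definition total_degree :: "('a \<Rightarrow>\<^sub>0 nat) \<Rightarrow> nat" where
  "total_degree m = sum (Poly_Mapping.lookup m) (Poly_Mapping.keys m)"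

lemma total_degree_superset:
  assumes "finite A" "Poly_Mapping.keys m \<subseteq> A"
  shows "total_degree m = sum (Poly_Mapping.lookup m) A"
  unfolding total_degree_def using assms
  by (intro sum.mono_neutral_left) (auto simp: in_keys_iff)

lemma keys_add_nat:
  "Poly_Mapping.keys (a + b :: 'a \<Rightarrow>\<^sub>0 nat) = Poly_Mapping.keys a \<union> Poly_Mapping.keys b"
  by (auto simp: in_keys_iff lookup_add)

lemma total_degree_add: "total_degree (a + b) = total_degree a + total_degree b"
proof -
  let ?A = "Poly_Mapping.keys a \<union> Poly_Mapping.keys b"
  have "total_degree (a + b) = sum (Poly_Mapping.lookup (a + b)) ?A"
    by (rule total_degree_superset) (simp_all add: keys_add_nat)
  also have "\<dots> = sum (Poly_Mapping.lookup a) ?A + sum (Poly_Mapping.lookup b) ?A"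
    by (simp add: lookup_add sum.distrib)
  also have "\<dots> = total_degree a + total_degree b"
    by (simp add: total_degree_superset[symmetric])
  finally show ?thesis .
qed

lemma total_degree_single [simp]: "total_degree (Poly_Mapping.single i e) = e"
  by (simp add: total_degree_def)

lemma total_degree_sum: "finite S \<Longrightarrow> total_degree (sum f S) = (\<Sum>s\<in>S. total_degree (f s))"
  by (induction S rule: finite_induct) (simp_all add: total_degree_add, simp add: total_degree_def)

lemma diff_single_add_left:
  assumes "Poly_Mapping.lookup m i \<ge> 1"
  shows "(m + n) - Poly_Mapping.single i 1 = (m - Poly_Mapping.single i 1) + (n :: 'a \<Rightarrow>\<^sub>0 nat)"
proof (rule poly_mapping_eqI)
  fix k
  show "Poly_Mapping.lookup ((m + n) - Poly_Mapping.single i 1) k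
      = Poly_Mapping.lookup ((m - Poly_Mapping.single i 1) + n) k"
    using assms by (cases "i = k") (simp_all add: lookup_add lookup_minus lookup_single when_def)
qed

lemma diff_single_add_right:
  assumes "Poly_Mapping.lookup n i \<ge> 1"
  shows "(m + n) - Poly_Mapping.single i 1 = m + (n - Poly_Mapping.single i 1 :: 'a \<Rightarrow>\<^sub>0 nat)"
  using diff_single_add_left[OF assms, of m] by (simp add: add.commute)

lemma diff_single_add_single:
  assumes "i \<in> Poly_Mapping.keys m"
  shows "(m - Poly_Mapping.single i 1) + Poly_Mapping.single i 1 = (m :: 'a \<Rightarrow>\<^sub>0 nat)"
proof (rule poly_mapping_eqI)
  fix k
  show "Poly_Mapping.lookup ((m - Poly_Mapping.single i 1) + Poly_Mapping.single i 1) k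
      = Poly_Mapping.lookup m k"
    using assms
    by (cases "i = k") (simp_all add: lookup_add lookup_minus lookup_single when_def in_keys_iff)
qed

lemma total_degree_diff_single:
  assumes "i \<in> Poly_Mapping.keys m"
  shows "total_degree (m - Poly_Mapping.single i 1) = total_degree m - 1" "total_degree m \<ge> 1"
proof -
  have "total_degree m = total_degree (m - Poly_Mapping.single i 1) + 1"
    by (metis diff_single_add_single[OF assms] total_degree_add total_degree_single)
  then show "total_degree (m - Poly_Mapping.single i 1) = total_degree m - 1" "total_degree m \<ge> 1"
    by auto
qed


section \<open>Derivations of \<open>k{x}\<close>\<close>

text \<open>\<open>dpoly_der g\<close> is the derivation of \<open>k{x}\<close> with \<open>x\<^sub>i \<mapsto> g i\<close>.\<close>

definition dpoly_der_monom :: "(nat \<Rightarrow> 'k::comm_ring_1 dpoly) \<Rightarrow> (nat \<Rightarrow>\<^sub>0 nat) \<Rightarrow> 'k dpoly" where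
  "dpoly_der_monom g m = (\<Sum>i\<in>Poly_Mapping.keys m.
     of_nat (Poly_Mapping.lookup m i) * dmonom (m - Poly_Mapping.single i 1) * g i)"

definition dpoly_der :: "(nat \<Rightarrow> 'k::comm_ring_1 dpoly) \<Rightarrow> 'k dpoly \<Rightarrow> 'k dpoly" where
  "dpoly_der g p = (\<Sum>m\<in>Poly_Mapping.keys p. dconst (Poly_Mapping.lookup p m) * dpoly_der_monom g m)"

lemma dpoly_der_monom_superset:
  assumes "finite A" "Poly_Mapping.keys m \<subseteq> A"
  shows "dpoly_der_monom g m
    = (\<Sum>i\<in>A. of_nat (Poly_Mapping.lookup m i) * dmonom (m - Poly_Mapping.single i 1) * g i)"
  unfolding dpoly_der_monom_def using assms
  by (intro sum.mono_neutral_left) (auto simp: in_keys_iff)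

lemma dpoly_der_monom_add:
  fixes g :: "nat \<Rightarrow> 'k::comm_ring_1 dpoly"
  shows "dpoly_der_monom g (a + b) = dpoly_der_monom g a * dmonom b + dmonom a * dpoly_der_monom g b"
proof -
  let ?A = "Poly_Mapping.keys a \<union> Poly_Mapping.keys b"
  let ?d = "\<lambda>m i. of_nat (Poly_Mapping.lookup m i) * dmonom (m - Poly_Mapping.single i 1) * g i"
  have fin: "finite ?A" by simp
  have "?d (a + b) i = ?d a i * dmonom b + dmonom a * ?d b i" for i
  proof -
    have a: "of_nat (Poly_Mapping.lookup a i) * dmonom (a + b - Poly_Mapping.single i 1)
        = of_nat (Poly_Mapping.lookup a i) * (dmonom (a - Poly_Mapping.single i 1) * dmonom b :: 'k dpoly)"
    proof (cases "Poly_Mapping.lookup a i = 0")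
      case False
      then show ?thesis by (simp only: diff_single_add_left mult_single mult_1_right)
    qed simp
    have b: "of_nat (Poly_Mapping.lookup b i) * dmonom (a + b - Poly_Mapping.single i 1)
        = of_nat (Poly_Mapping.lookup b i) * (dmonom a * dmonom (b - Poly_Mapping.single i 1) :: 'k dpoly)"
    proof (cases "Poly_Mapping.lookup b i = 0")
      case False
      then show ?thesis by (simp only: diff_single_add_right mult_single mult_1_right)
    qed simp
    have "?d (a + b) i = of_nat (Poly_Mapping.lookup a i) * dmonom (a + b - Poly_Mapping.single i 1) * g i
        + of_nat (Poly_Mapping.lookup b i) * dmonom (a + b - Poly_Mapping.single i 1) * g i"
      by (simp add: lookup_add distrib_right)
    also have "\<dots> = ?d a i * dmonom b + dmonom a * ?d b i"
      using a b by (simp add: mult.assoc mult.left_commute)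
    finally show ?thesis .
  qed
  then have "dpoly_der_monom g (a + b) = (\<Sum>i\<in>?A. ?d a i * dmonom b + dmonom a * ?d b i)"
    by (simp add: dpoly_der_monom_superset[OF fin] keys_add_nat)
  also have "\<dots> = dpoly_der_monom g a * dmonom b + dmonom a * dpoly_der_monom g b"
    by (simp add: dpoly_der_monom_superset[OF fin] sum.distrib sum_distrib_left sum_distrib_right)
  finally show ?thesis .
qed

lemma dpoly_der_superset:
  assumes "finite A" "Poly_Mapping.keys p \<subseteq> A"
  shows "dpoly_der g p = (\<Sum>m\<in>A. dconst (Poly_Mapping.lookup p m) * dpoly_der_monom g m)"
  unfolding dpoly_der_def using assms by (intro sum.mono_neutral_left) (auto simp: in_keys_iff)

lemma dpoly_der_add: "dpoly_der g (p + q) = dpoly_der g p + dpoly_der g q"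
proof -
  let ?A = "Poly_Mapping.keys p \<union> Poly_Mapping.keys q"
  have fin: "finite ?A" by simp
  have "dpoly_der g (p + q)
      = (\<Sum>m\<in>?A. dconst (Poly_Mapping.lookup (p + q) m) * dpoly_der_monom g m)"
    by (rule dpoly_der_superset[OF fin]) (rule keys_add)
  also have "\<dots> = (\<Sum>m\<in>?A. dconst (Poly_Mapping.lookup p m) * dpoly_der_monom g m)
      + (\<Sum>m\<in>?A. dconst (Poly_Mapping.lookup q m) * dpoly_der_monom g m)"
    by (simp add: lookup_add dconst_add distrib_right sum.distrib)
  also have "\<dots> = dpoly_der g p + dpoly_der g q"
    by (simp add: dpoly_der_superset[OF fin, symmetric])
  finally show ?thesis .
qed

lemma dpoly_der_single: "dpoly_der g (Poly_Mapping.single m c) = dconst c * dpoly_der_monom g m"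
  using dpoly_der_superset[of "{m}" "Poly_Mapping.single m c" g] by simp

lemma dpoly_der_sum: "finite S \<Longrightarrow> dpoly_der g (sum f S) = (\<Sum>s\<in>S. dpoly_der g (f s))"
  by (induction S rule: finite_induct) (simp_all add: dpoly_der_add, simp add: dpoly_der_def)

lemma dpoly_der_mult: "dpoly_der g (p * q) = dpoly_der g p * q + p * dpoly_der g q"
proof -
  let ?A = "Poly_Mapping.keys p" and ?B = "Poly_Mapping.keys q"
  let ?p = "\<lambda>a. dconst (Poly_Mapping.lookup p a)" and ?q = "\<lambda>b. dconst (Poly_Mapping.lookup q b)"
  have "dpoly_der g (p * q) = dpoly_der g (\<Sum>a\<in>?A. \<Sum>b\<in>?B.
      Poly_Mapping.single (a + b) (Poly_Mapping.lookup p a * Poly_Mapping.lookup q b))"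
    by (rule arg_cong[where f = "dpoly_der g", OF mult_eq_sum_single]) auto
  also have "\<dots> = (\<Sum>a\<in>?A. \<Sum>b\<in>?B. ?p a * ?q b
      * (dpoly_der_monom g a * dmonom b + dmonom a * dpoly_der_monom g b))"
    by (simp add: dpoly_der_sum dpoly_der_single dpoly_der_monom_add dconst_mult)
  also have "\<dots> = (\<Sum>a\<in>?A. \<Sum>b\<in>?B. ?p a * dpoly_der_monom g a * (?q b * dmonom b))
      + (\<Sum>a\<in>?A. \<Sum>b\<in>?B. ?p a * dmonom a * (?q b * dpoly_der_monom g b))"
    by (simp add: sum.distrib[symmetric] algebra_simps)
  also have "\<dots> = (\<Sum>a\<in>?A. ?p a * dpoly_der_monom g a) * (\<Sum>b\<in>?B. ?q b * dmonom b)
      + (\<Sum>a\<in>?A. ?p a * dmonom a) * (\<Sum>b\<in>?B. ?q b * dpoly_der_monom g b)"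
    by (simp only: sum_product)
  also have "\<dots> = dpoly_der g p * q + p * dpoly_der g q"
    by (simp add: dpoly_der_def flip: sum_dconst_mult_dmonom_superset[of ?A p]
        sum_dconst_mult_dmonom_superset[of ?B q])
  finally show ?thesis .
qed

lemma dpoly_der_dvar: "dpoly_der g (dvar i) = g i"
  by (simp add: dvar_def dpoly_der_single dpoly_der_monom_def)

lemma dpoly_der_dconst: "dpoly_der g (dconst c) = 0"
  by (simp add: dconst_def dpoly_der_single dpoly_der_monom_def)

lemma dderiv_eq_dpoly_der: "dderiv p = dpoly_der (\<lambda>i. dvar (Suc i)) p"
  unfolding dderiv_def dpoly_der_def dpoly_der_monom_def sum_distrib_left
  by (intro sum.cong refl)
    (simp add: dconst_def dvar_def mult_single single_of_nat[symmetric] del: single_of_nat)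

lemma dderiv_add: "dderiv (p + q) = dderiv p + dderiv q"
  by (simp add: dderiv_eq_dpoly_der dpoly_der_add)

lemma dderiv_mult: "dderiv (p * q) = dderiv p * q + p * dderiv q"
  by (simp add: dderiv_eq_dpoly_der dpoly_der_mult)

lemma dderiv_dvar: "dderiv (dvar i) = dvar (Suc i)"
  by (simp add: dderiv_eq_dpoly_der dpoly_der_dvar)

lemma dderiv_sum: "finite S \<Longrightarrow> dderiv (sum f S) = (\<Sum>s\<in>S. dderiv (f s))"
  by (simp add: dderiv_eq_dpoly_der dpoly_der_sum)

lemma dderiv_of_nat: "dderiv (of_nat n :: 'k::comm_ring_1 dpoly) = 0"
  by (simp add: of_nat_eq_dconst dderiv_eq_dpoly_der dpoly_der_dconst)

lemma funpow_dderiv_dvar: "(dderiv ^^ j) (dvar i) = dvar (i + j)"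
  by (induction j) (simp_all add: dderiv_dvar)


definition dpartial :: "nat \<Rightarrow> 'k::comm_ring_1 dpoly \<Rightarrow> 'k dpoly" where
  "dpartial j = dpoly_der (\<lambda>i. if i = j then 1 else 0)"

lemma dpartial_add: "dpartial j (p + q) = dpartial j p + dpartial j q"
  by (simp add: dpartial_def dpoly_der_add)

lemma dpartial_mult: "dpartial j (p * q) = dpartial j p * q + p * dpartial j q"
  by (simp add: dpartial_def dpoly_der_mult)

lemma dpartial_dvar: "dpartial j (dvar i) = (if i = j then 1 else 0)"
  by (simp add: dpartial_def dpoly_der_dvar)

lemma dpartial_sum: "finite S \<Longrightarrow> dpartial j (sum f S) = (\<Sum>s\<in>S. dpartial j (f s))"
  by (simp add: dpartial_def dpoly_der_sum)

lemma dpartial_of_nat: "dpartial j (of_nat c :: 'k::comm_ring_1 dpoly) = 0"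
  by (simp add: of_nat_eq_dconst dpartial_def dpoly_der_dconst)

lemma dpartial_single:
  fixes c :: "'k::comm_ring_1"
  shows "dpartial j (Poly_Mapping.single m c)
    = dconst (c * of_nat (Poly_Mapping.lookup m j)) * dmonom (m - Poly_Mapping.single j 1)"
proof -
  have "dpoly_der_monom (\<lambda>i. if i = j then 1 else 0) m
      = (\<Sum>i\<in>Poly_Mapping.keys m. if i = j
          then of_nat (Poly_Mapping.lookup m i) * dmonom (m - Poly_Mapping.single i 1) else 0)"
    unfolding dpoly_der_monom_def by (rule sum.cong) auto
  also have "\<dots> = of_nat (Poly_Mapping.lookup m j) * dmonom (m - Poly_Mapping.single j 1)"
    by (auto simp: sum.delta in_keys_iff)
  finally have "dpoly_der_monom (\<lambda>i. if i = j then 1 else 0) m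
      = (of_nat (Poly_Mapping.lookup m j) * dmonom (m - Poly_Mapping.single j 1) :: 'k dpoly)" .
  then show ?thesis
    unfolding dpartial_def dpoly_der_single by (simp only: of_nat_eq_dconst dconst_mult mult.assoc)
qed

lemma keys_dpartial:
  assumes "m' \<in> Poly_Mapping.keys (dpartial j p)"
  obtains m where "m \<in> Poly_Mapping.keys p" "j \<in> Poly_Mapping.keys m" "m' = m - Poly_Mapping.single j 1"
proof -
  let ?c = "\<lambda>m. Poly_Mapping.lookup p m * of_nat (Poly_Mapping.lookup m j)"
  have "dpartial j p = dpartial j (\<Sum>m\<in>Poly_Mapping.keys p. Poly_Mapping.single m (Poly_Mapping.lookup p m))"
    by (rule arg_cong[where f = "dpartial j", OF sum_single_lookup])
  also have "\<dots> = (\<Sum>m\<in>Poly_Mapping.keys p. dconst (?c m) * dmonom (m - Poly_Mapping.single j 1))"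
    by (simp add: dpartial_sum dpartial_single)
  also have "\<dots> = (\<Sum>m\<in>Poly_Mapping.keys p. Poly_Mapping.single (m - Poly_Mapping.single j 1) (?c m))"
    by (rule sum.cong[OF refl]) (rule single_eq_dconst_mult[symmetric])
  finally have "Poly_Mapping.keys (dpartial j p)
      \<subseteq> (\<Union>m\<in>Poly_Mapping.keys p. Poly_Mapping.keys (Poly_Mapping.single (m - Poly_Mapping.single j 1) (?c m)))"
    by (simp only: keys_sum)
  with assms obtain m where m: "m \<in> Poly_Mapping.keys p" "?c m \<noteq> 0" "m' = m - Poly_Mapping.single j 1"
    by (auto split: if_splits)
  then have "j \<in> Poly_Mapping.keys m"
    by (cases "Poly_Mapping.lookup m j = 0") (auto simp: in_keys_iff)
  with m that show ?thesis by blast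
qed

lemma dpartial_eq_0_if_not_in_keys:
  assumes "\<forall>m\<in>Poly_Mapping.keys p. j \<notin> Poly_Mapping.keys m"
  shows "dpartial j p = 0"
  using keys_dpartial[of _ j p] assms by (metis equals0I keys_eq_empty)


section \<open>Substituting univariate polynomials for the variables\<close>

definition dsubst_monom :: "(nat \<Rightarrow> 'k::comm_ring_1 dpoly poly) \<Rightarrow> (nat \<Rightarrow>\<^sub>0 nat) \<Rightarrow> 'k dpoly poly" where
  "dsubst_monom g m = (\<Prod>i\<in>Poly_Mapping.keys m. g i ^ Poly_Mapping.lookup m i)"

definition dsubst :: "(nat \<Rightarrow> 'k::comm_ring_1 dpoly poly) \<Rightarrow> 'k dpoly \<Rightarrow> 'k dpoly poly" where
  "dsubst g p = (\<Sum>m\<in>Poly_Mapping.keys p. smult (dconst (Poly_Mapping.lookup p m)) (dsubst_monom g m))"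

lemma dsubst_monom_superset:
  assumes "finite A" "Poly_Mapping.keys m \<subseteq> A"
  shows "dsubst_monom g m = (\<Prod>i\<in>A. g i ^ Poly_Mapping.lookup m i)"
  unfolding dsubst_monom_def using assms by (intro prod.mono_neutral_left) (auto simp: in_keys_iff)

lemma dsubst_monom_add: "dsubst_monom g (a + b) = dsubst_monom g a * dsubst_monom g b"
proof -
  let ?A = "Poly_Mapping.keys a \<union> Poly_Mapping.keys b"
  have fin: "finite ?A" by simp
  have "dsubst_monom g (a + b) = (\<Prod>i\<in>?A. g i ^ Poly_Mapping.lookup (a + b) i)"
    by (rule dsubst_monom_superset[OF fin]) (simp add: keys_add_nat)
  also have "\<dots> = (\<Prod>i\<in>?A. g i ^ Poly_Mapping.lookup a i) * (\<Prod>i\<in>?A. g i ^ Poly_Mapping.lookup b i)"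
    by (simp add: lookup_add power_add prod.distrib)
  also have "\<dots> = dsubst_monom g a * dsubst_monom g b"
    by (simp add: dsubst_monom_superset[OF fin])
  finally show ?thesis .
qed

lemma dsubst_superset:
  assumes "finite A" "Poly_Mapping.keys p \<subseteq> A"
  shows "dsubst g p = (\<Sum>m\<in>A. smult (dconst (Poly_Mapping.lookup p m)) (dsubst_monom g m))"
  unfolding dsubst_def using assms by (intro sum.mono_neutral_left) (auto simp: in_keys_iff)

lemma dsubst_add: "dsubst g (p + q) = dsubst g p + dsubst g q"
proof -
  let ?A = "Poly_Mapping.keys p \<union> Poly_Mapping.keys q"
  have fin: "finite ?A" by simp
  have "dsubst g (p + q)
      = (\<Sum>m\<in>?A. smult (dconst (Poly_Mapping.lookup (p + q) m)) (dsubst_monom g m))"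
    by (rule dsubst_superset[OF fin]) (rule keys_add)
  also have "\<dots> = (\<Sum>m\<in>?A. smult (dconst (Poly_Mapping.lookup p m)) (dsubst_monom g m))
      + (\<Sum>m\<in>?A. smult (dconst (Poly_Mapping.lookup q m)) (dsubst_monom g m))"
    by (simp add: lookup_add dconst_add smult_add_left sum.distrib)
  also have "\<dots> = dsubst g p + dsubst g q"
    by (simp add: dsubst_superset[OF fin, symmetric])
  finally show ?thesis .
qed

lemma dsubst_0 [simp]: "dsubst g 0 = 0"
  by (simp add: dsubst_def)

lemma dsubst_single: "dsubst g (Poly_Mapping.single m c) = smult (dconst c) (dsubst_monom g m)"
  using dsubst_superset[of "{m}" "Poly_Mapping.single m c" g] by simp

lemma dsubst_sum: "finite S \<Longrightarrow> dsubst g (sum f S) = (\<Sum>s\<in>S. dsubst g (f s))"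
  by (induction S rule: finite_induct) (simp_all add: dsubst_add)

lemma dsubst_mult: "dsubst g (p * q) = dsubst g p * dsubst g q"
proof -
  let ?A = "Poly_Mapping.keys p" and ?B = "Poly_Mapping.keys q"
  have "dsubst g (p * q) = dsubst g (\<Sum>a\<in>?A. \<Sum>b\<in>?B.
      Poly_Mapping.single (a + b) (Poly_Mapping.lookup p a * Poly_Mapping.lookup q b))"
    by (rule arg_cong[where f = "dsubst g", OF mult_eq_sum_single]) auto
  also have "\<dots> = (\<Sum>a\<in>?A. \<Sum>b\<in>?B. smult (dconst (Poly_Mapping.lookup p a)) (dsubst_monom g a)
      * smult (dconst (Poly_Mapping.lookup q b)) (dsubst_monom g b))"
    by (simp add: dsubst_sum dsubst_single dsubst_monom_add dconst_mult mult.commute mult.left_commute)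
  also have "\<dots> = dsubst g p * dsubst g q"
    by (simp add: dsubst_def sum_product)
  finally show ?thesis .
qed

lemma dsubst_dvar: "dsubst g (dvar i) = g i"
  by (simp add: dvar_def dsubst_single dsubst_monom_def)

lemma dsubst_1: "dsubst g 1 = 1"
  using dsubst_single[of g 0 1] by (simp add: dsubst_monom_def)

lemma dsubst_of_nat: "dsubst g (of_nat n) = of_nat n"
  by (induction n) (simp_all add: dsubst_add dsubst_1)

lemma coeff_0_dsubst:
  assumes "\<And>i. coeff (g i) 0 = dvar i"
  shows "coeff (dsubst g p) 0 = p"
proof -
  have "coeff (dsubst_monom g m) 0 = dmonom m" for m
  proof -
    have "coeff (dsubst_monom g m) 0 = (\<Prod>i\<in>Poly_Mapping.keys m. poly (g i) 0 ^ Poly_Mapping.lookup m i)"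
      by (simp only: dsubst_monom_def poly_0_coeff_0 [symmetric] poly_prod poly_power)
    then show ?thesis
      by (simp add: poly_0_coeff_0 assms dmonom_eq_prod_dvar)
  qed
  then have "coeff (dsubst g p) 0 = (\<Sum>m\<in>Poly_Mapping.keys p. dconst (Poly_Mapping.lookup p m) * dmonom m)"
    by (simp add: dsubst_def coeff_sum)
  also have "\<dots> = p"
    by (rule sum_dconst_mult_dmonom_superset[symmetric]) auto
  finally show ?thesis .
qed

lemma degree_dsubst_le:
  assumes "\<And>i. degree (g i) \<le> 1" "\<forall>m\<in>Poly_Mapping.keys p. total_degree m \<le> d"
  shows "degree (dsubst g p) \<le> d"
  unfolding dsubst_def
proof (rule degree_sum_le)
  fix m assume m: "m \<in> Poly_Mapping.keys p"
  have "degree (dsubst_monom g m) \<le> (\<Sum>i\<in>Poly_Mapping.keys m. degree (g i ^ Poly_Mapping.lookup m i))"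
    unfolding dsubst_monom_def
    using degree_prod_sum_le[of "Poly_Mapping.keys m" "\<lambda>i. g i ^ Poly_Mapping.lookup m i"]
    by (simp add: o_def)
  also have "\<dots> \<le> (\<Sum>i\<in>Poly_Mapping.keys m. Poly_Mapping.lookup m i)"
    by (rule sum_mono, rule order_trans[OF degree_power_le]) (use assms(1) in simp)
  also have "\<dots> \<le> d"
    using assms(2) m by (simp add: total_degree_def)
  finally show "degree (smult (dconst (Poly_Mapping.lookup p m)) (dsubst_monom g m)) \<le> d"
    using degree_smult_le order_trans by blast
qed simp


section \<open>The ideal \<open>[x\<^sup>2]\<close> as the ideal generated by the derivatives of \<open>x\<^sup>2\<close>\<close>

lemma sum_binomial_pascal:
  fixes f :: "nat \<Rightarrow> nat \<Rightarrow> 'a::comm_semiring_1"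
  shows "(\<Sum>k\<le>n. of_nat (n choose k) * f (Suc k) (n - k)) + (\<Sum>k\<le>n. of_nat (n choose k) * f k (Suc n - k))
       = (\<Sum>k\<le>Suc n. of_nat (Suc n choose k) * f k (Suc n - k))"
proof -
  have "(\<Sum>k\<le>n. of_nat (n choose k) * f k (Suc n - k))
      = (\<Sum>k\<le>Suc n. of_nat (n choose k) * f k (Suc n - k))"
    by (simp add: sum.atMost_Suc binomial_eq_0)
  also have "\<dots> = f 0 (Suc n) + (\<Sum>k\<le>n. of_nat (n choose Suc k) * f (Suc k) (n - k))"
    by (subst sum.atMost_Suc_shift) simp
  finally have "(\<Sum>k\<le>n. of_nat (n choose k) * f k (Suc n - k))
      = f 0 (Suc n) + (\<Sum>k\<le>n. of_nat (n choose Suc k) * f (Suc k) (n - k))" .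
  moreover have "(\<Sum>k\<le>Suc n. of_nat (Suc n choose k) * f k (Suc n - k))
      = f 0 (Suc n) + (\<Sum>k\<le>n. (of_nat (n choose k) + of_nat (n choose Suc k)) * f (Suc k) (n - k))"
    by (subst sum.atMost_Suc_shift) simp
  ultimately show ?thesis
    by (simp add: distrib_right sum.distrib algebra_simps)
qed

lemma sum_binomial_mult_index:
  fixes f :: "nat \<Rightarrow> nat \<Rightarrow> 'a::comm_semiring_1"
  shows "(\<Sum>i\<le>n. of_nat (n choose i) * of_nat i * f (i - 1) (n - i))
    = of_nat n * (\<Sum>i\<le>n - 1. of_nat (n - 1 choose i) * f i (n - 1 - i))"
proof (cases n)
  case (Suc m)
  have "(\<Sum>i\<le>Suc m. of_nat (Suc m choose i) * of_nat i * f (i - 1) (Suc m - i))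
      = (\<Sum>i\<le>m. of_nat (Suc m choose Suc i) * of_nat (Suc i) * f i (m - i))"
    by (subst sum.atMost_Suc_shift) simp
  also have "\<dots> = (\<Sum>i\<le>m. of_nat (Suc m) * (of_nat (m choose i) * f i (m - i)))"
  proof (rule sum.cong[OF refl])
    fix i
    have "(of_nat (Suc m choose Suc i) :: 'a) * of_nat (Suc i) = of_nat (Suc m) * of_nat (m choose i)"
      using arg_cong[OF Suc_times_binomial[of i m], of "of_nat :: nat \<Rightarrow> 'a"]
      by (simp only: of_nat_mult mult.commute)
    then show "of_nat (Suc m choose Suc i) * of_nat (Suc i) * f i (m - i)
        = of_nat (Suc m) * (of_nat (m choose i) * f i (m - i))"
      by (simp only: mult.assoc[symmetric])
  qed
  finally show ?thesis
    using Suc by (simp add: sum_distrib_left)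
qed simp

lemma sum_binomial_mult_coindex:
  fixes f :: "nat \<Rightarrow> nat \<Rightarrow> 'a::comm_semiring_1"
  shows "(\<Sum>i\<le>n. of_nat (n choose i) * of_nat (n - i) * f i (n - i - 1))
    = of_nat n * (\<Sum>i\<le>n - 1. of_nat (n - 1 choose i) * f i (n - 1 - i))"
proof (cases n)
  case (Suc m)
  have "(\<Sum>i\<le>Suc m. of_nat (Suc m choose i) * of_nat (Suc m - i) * f i (Suc m - i - 1))
      = (\<Sum>i\<le>m. of_nat (Suc m choose i) * of_nat (Suc m - i) * f i (Suc m - i - 1))"
    by (simp add: sum.atMost_Suc)
  also have "\<dots> = (\<Sum>i\<le>m. of_nat (Suc m) * (of_nat (m choose i) * f i (m - i)))"
  proof (rule sum.cong[OF refl])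
    fix i
    have "(Suc m - i) * (Suc m choose i) = Suc m * (m choose i)"
      using binomial_absorb_comp[of "Suc m" i] by (simp only: diff_Suc_1)
    then have "(of_nat (Suc m choose i) :: 'a) * of_nat (Suc m - i) = of_nat (Suc m) * of_nat (m choose i)"
      by (metis of_nat_mult mult.commute)
    moreover have "Suc m - i - 1 = m - i" by simp
    ultimately show "of_nat (Suc m choose i) * of_nat (Suc m - i) * f i (Suc m - i - 1)
        = of_nat (Suc m) * (of_nat (m choose i) * f i (m - i))"
      by (simp only: mult.assoc[symmetric])
  qed
  finally show ?thesis
    using Suc by (simp add: sum_distrib_left)
qed simp

text \<open>\<open>sq_deriv n\<close> is the \<open>n\<close>-th derivative \<open>(x\<^sup>2)\<^sup>(\<^sup>n\<^sup>)\<close>.\<close>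

definition sq_deriv :: "nat \<Rightarrow> 'k::comm_ring_1 dpoly" where
  "sq_deriv n = (\<Sum>i\<le>n. of_nat (n choose i) * (dvar i * dvar (n - i)))"

lemma dderiv_sq_deriv: "dderiv (sq_deriv n) = sq_deriv (Suc n)"
proof -
  have "dderiv (sq_deriv n) = (\<Sum>i\<le>n. of_nat (n choose i)
      * (dvar (Suc i) * dvar (n - i) + dvar i * dvar (Suc (n - i))))"
    by (simp add: sq_deriv_def dderiv_sum dderiv_mult dderiv_of_nat dderiv_dvar)
  also have "\<dots> = (\<Sum>i\<le>n. of_nat (n choose i) * (dvar (Suc i) * dvar (n - i)))
      + (\<Sum>i\<le>n. of_nat (n choose i) * (dvar i * dvar (Suc n - i)))"
    by (simp add: distrib_left sum.distrib Suc_diff_le)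
  also have "\<dots> = sq_deriv (Suc n)"
    unfolding sq_deriv_def by (rule sum_binomial_pascal[where f = "\<lambda>a b. dvar a * dvar b"])
  finally show ?thesis .
qed

lemma total_degree_keys_sq_deriv:
  assumes "m \<in> Poly_Mapping.keys (sq_deriv n :: 'k::comm_ring_1 dpoly)"
  shows "total_degree m = 2"
proof -
  let ?m = "\<lambda>i. Poly_Mapping.single i 1 + Poly_Mapping.single (n - i) (1::nat)"
  have "sq_deriv n = (\<Sum>i\<le>n. Poly_Mapping.single (?m i) (of_nat (n choose i) :: 'k))"
    unfolding sq_deriv_def
    by (intro sum.cong refl)
      (simp add: dvar_def mult_single single_of_nat[symmetric] del: single_of_nat)
  then have "Poly_Mapping.keys (sq_deriv n :: 'k dpoly)
      \<subseteq> (\<Union>i\<le>n. Poly_Mapping.keys (Poly_Mapping.single (?m i) (of_nat (n choose i) :: 'k)))"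
    by (metis keys_sum)
  with assms obtain i where "m = ?m i"
    by (auto split: if_splits)
  then show ?thesis by (simp add: total_degree_add)
qed

lemma dideal_x2_mult: "p \<in> dideal_x2 \<Longrightarrow> r * p \<in> dideal_x2"
proof -
  assume p: "p \<in> dideal_x2"
  let ?c = "Poly_Mapping.lookup r 0"
  have "r - dconst ?c \<in> kplus"
    by (simp add: kplus_def dconst_def lookup_minus)
  then have "(r - dconst ?c) * p + dconst ?c * p \<in> dideal_x2"
    using p by (intro dideal_x2.add dideal_x2.mult dideal_x2.smult)
  then show ?thesis by (simp add: algebra_simps)
qed

lemma dideal_x2_sum:
  "finite S \<Longrightarrow> (\<And>s. s \<in> S \<Longrightarrow> f s \<in> dideal_x2) \<Longrightarrow> sum f S \<in> dideal_x2"
  by (induction S rule: finite_induct) (auto intro: dideal_x2.zero dideal_x2.add)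

lemma dideal_x2_uminus: "p \<in> dideal_x2 \<Longrightarrow> - p \<in> dideal_x2"
  using dideal_x2_mult[of p "- 1"] by simp

lemma dideal_x2_diff: "p \<in> dideal_x2 \<Longrightarrow> q \<in> dideal_x2 \<Longrightarrow> p - q \<in> dideal_x2"
  using dideal_x2.add[of p "- q"] dideal_x2_uminus[of q] by simp

lemma dideal_x2_dconst_mult_cancel:
  fixes c :: "'k::field dpoly"
  assumes "a \<noteq> 0" "dconst a * c \<in> dideal_x2"
  shows "c \<in> dideal_x2"
proof -
  have "dconst (inverse a) * (dconst a * c) \<in> dideal_x2"
    using assms(2) by (rule dideal_x2.smult)
  then show ?thesis
    using assms(1) by (simp add: mult.assoc[symmetric] dconst_mult[symmetric])
qed

lemma sq_deriv_in_dideal_x2: "sq_deriv n \<in> dideal_x2"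
proof (induction n)
  case 0
  then show ?case by (simp add: sq_deriv_def dideal_x2.gen)
next
  case (Suc n)
  then show ?case using dideal_x2.deriv[of "sq_deriv n"] by (simp add: dderiv_sq_deriv)
qed

inductive_set sq_deriv_ideal :: "'k::comm_ring_1 dpoly set" where
  zero: "0 \<in> sq_deriv_ideal"
| add_mult: "p \<in> sq_deriv_ideal \<Longrightarrow> p + h * sq_deriv n \<in> sq_deriv_ideal"

lemma sq_deriv_ideal_add:
  assumes "p \<in> sq_deriv_ideal" "q \<in> sq_deriv_ideal"
  shows "p + q \<in> sq_deriv_ideal"
  using assms(2)
proof (induction q rule: sq_deriv_ideal.induct)
  case zero
  then show ?case using assms(1) by simp
next
  case (add_mult q h n)
  then show ?case
    using sq_deriv_ideal.add_mult[of "p + q" h n] by (simp add: add.assoc)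
qed

lemma sq_deriv_ideal_mult: "p \<in> sq_deriv_ideal \<Longrightarrow> r * p \<in> sq_deriv_ideal"
proof (induction p rule: sq_deriv_ideal.induct)
  case zero
  then show ?case by (simp add: sq_deriv_ideal.zero)
next
  case (add_mult p h n)
  then show ?case
    using sq_deriv_ideal.add_mult[of "r * p" "r * h" n] by (simp add: algebra_simps)
qed

lemma mult_sq_deriv_in_sq_deriv_ideal: "h * sq_deriv n \<in> sq_deriv_ideal"
  using sq_deriv_ideal.add_mult[OF sq_deriv_ideal.zero, of h n] by simp

lemma sq_deriv_ideal_dderiv: "p \<in> sq_deriv_ideal \<Longrightarrow> dderiv p \<in> sq_deriv_ideal"
proof (induction p rule: sq_deriv_ideal.induct)
  case zero
  then show ?case by (simp add: sq_deriv_ideal.zero dderiv_eq_dpoly_der dpoly_der_def)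
next
  case (add_mult p h n)
  have "dderiv (p + h * sq_deriv n) = dderiv p + (dderiv h * sq_deriv n + h * sq_deriv (Suc n))"
    by (simp add: dderiv_add dderiv_mult dderiv_sq_deriv)
  then show ?case
    using add_mult.IH
    by (simp add: sq_deriv_ideal_add mult_sq_deriv_in_sq_deriv_ideal)
qed

lemma dideal_x2_subset_sq_deriv_ideal: "p \<in> dideal_x2 \<Longrightarrow> p \<in> sq_deriv_ideal"
proof (induction rule: dideal_x2.induct)
  case gen
  then show ?case using mult_sq_deriv_in_sq_deriv_ideal[of 1 0] by (simp add: sq_deriv_def)
qed (simp_all add: sq_deriv_ideal.zero sq_deriv_ideal_add sq_deriv_ideal_mult sq_deriv_ideal_dderiv)


text \<open>Each \<open>sq_deriv n\<close> is homogeneous of degree 2, so truncating a representation \<open>\<Sum> h q\<^sub>n\<close>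
  in total degree \<open>D\<close> truncates every cofactor \<open>h\<close> in degree \<open>D - 2\<close>.\<close>

inductive_set sq_deriv_ideal_deg :: "nat \<Rightarrow> 'k::comm_ring_1 dpoly set" for D where
  zero: "0 \<in> sq_deriv_ideal_deg D"
| add_mult: "p \<in> sq_deriv_ideal_deg D \<Longrightarrow> \<forall>m\<in>Poly_Mapping.keys h. total_degree m + 2 \<le> D
    \<Longrightarrow> p + h * sq_deriv n \<in> sq_deriv_ideal_deg D"

definition trunc_deg :: "nat \<Rightarrow> 'k::comm_ring_1 dpoly \<Rightarrow> 'k dpoly" where
  "trunc_deg D p = (\<Sum>m\<in>{m\<in>Poly_Mapping.keys p. total_degree m \<le> D}.
    Poly_Mapping.single m (Poly_Mapping.lookup p m))"

lemma lookup_trunc_deg: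
  "Poly_Mapping.lookup (trunc_deg D p) m = (if total_degree m \<le> D then Poly_Mapping.lookup p m else 0)"
proof -
  have "Poly_Mapping.lookup (trunc_deg D p) m
      = (\<Sum>m'\<in>{m\<in>Poly_Mapping.keys p. total_degree m \<le> D}. if m' = m then Poly_Mapping.lookup p m' else 0)"
    unfolding trunc_deg_def lookup_sum by (rule sum.cong) (auto simp: lookup_single when_def)
  also have "\<dots> = (if total_degree m \<le> D then Poly_Mapping.lookup p m else 0)"
    by (auto simp: sum.delta in_keys_iff)
  finally show ?thesis .
qed

lemma trunc_deg_add: "trunc_deg D (p + q) = trunc_deg D p + trunc_deg D q"
  by (rule poly_mapping_eqI) (simp add: lookup_trunc_deg lookup_add)

lemma trunc_deg_sum: "finite S \<Longrightarrow> trunc_deg D (sum f S) = (\<Sum>s\<in>S. trunc_deg D (f s))"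
  by (induction S rule: finite_induct) (simp_all add: trunc_deg_add, simp add: trunc_deg_def)

lemma trunc_deg_single:
  "trunc_deg D (Poly_Mapping.single m c) = (if total_degree m \<le> D then Poly_Mapping.single m c else 0)"
  by (rule poly_mapping_eqI) (auto simp: lookup_trunc_deg lookup_single when_def)

lemma trunc_deg_id: "\<forall>m\<in>Poly_Mapping.keys p. total_degree m \<le> D \<Longrightarrow> trunc_deg D p = p"
  by (rule poly_mapping_eqI) (auto simp: lookup_trunc_deg in_keys_iff)

lemma keys_trunc_deg:
  "m \<in> Poly_Mapping.keys (trunc_deg D p) \<Longrightarrow> total_degree m \<le> D \<and> m \<in> Poly_Mapping.keys p"
  by (auto simp: in_keys_iff lookup_trunc_deg split: if_splits)

lemma trunc_deg_mult_sq_deriv: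
  "trunc_deg D (h * sq_deriv n) = (if 2 \<le> D then trunc_deg (D - 2) h * sq_deriv n else 0)"
proof -
  let ?A = "Poly_Mapping.keys h" and ?B = "Poly_Mapping.keys (sq_deriv n :: 'a dpoly)"
  let ?t = "\<lambda>a b. if total_degree a + 2 \<le> D
    then Poly_Mapping.single (a + b) (Poly_Mapping.lookup h a * Poly_Mapping.lookup (sq_deriv n) b) else 0"
  have "trunc_deg D (h * sq_deriv n) = trunc_deg D (\<Sum>a\<in>?A. \<Sum>b\<in>?B.
      Poly_Mapping.single (a + b) (Poly_Mapping.lookup h a * Poly_Mapping.lookup (sq_deriv n) b))"
    by (rule arg_cong[where f = "trunc_deg D", OF mult_eq_sum_single]) auto
  also have "\<dots> = (\<Sum>a\<in>?A. \<Sum>b\<in>?B. ?t a b)"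
    by (simp add: trunc_deg_sum trunc_deg_single total_degree_add total_degree_keys_sq_deriv
        cong: sum.cong)
  finally have lhs: "trunc_deg D (h * sq_deriv n) = (\<Sum>a\<in>?A. \<Sum>b\<in>?B. ?t a b)" .
  show ?thesis
  proof (cases "2 \<le> D")
    case True
    have "trunc_deg (D - 2) h * sq_deriv n = (\<Sum>a\<in>?A. \<Sum>b\<in>?B. Poly_Mapping.single (a + b)
        (Poly_Mapping.lookup (trunc_deg (D - 2) h) a * Poly_Mapping.lookup (sq_deriv n) b))"
      by (rule mult_eq_sum_single) (auto dest: keys_trunc_deg)
    also have "\<dots> = (\<Sum>a\<in>?A. \<Sum>b\<in>?B. ?t a b)"
      using True by (intro sum.cong refl) (auto simp: lookup_trunc_deg)
    finally show ?thesis using lhs True by simp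
  qed (use lhs in simp)
qed

lemma trunc_deg_in_sq_deriv_ideal_deg:
  "p \<in> sq_deriv_ideal \<Longrightarrow> trunc_deg D p \<in> sq_deriv_ideal_deg D"
proof (induction rule: sq_deriv_ideal.induct)
  case zero
  then show ?case by (simp add: sq_deriv_ideal_deg.zero trunc_deg_def)
next
  case (add_mult p h n)
  show ?case
  proof (cases "2 \<le> D")
    case True
    have "trunc_deg D p + trunc_deg (D - 2) h * sq_deriv n \<in> sq_deriv_ideal_deg D"
      using add_mult.IH True by (intro sq_deriv_ideal_deg.add_mult) (auto dest: keys_trunc_deg)
    then show ?thesis using True by (simp add: trunc_deg_add trunc_deg_mult_sq_deriv)
  next
    case False
    then show ?thesis using add_mult.IH by (simp add: trunc_deg_add trunc_deg_mult_sq_deriv)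
  qed
qed

lemma dideal_x2_in_sq_deriv_ideal_deg:
  assumes "p \<in> dideal_x2" "\<forall>m\<in>Poly_Mapping.keys p. total_degree m \<le> D"
  shows "p \<in> sq_deriv_ideal_deg D"
  using trunc_deg_in_sq_deriv_ideal_deg[OF dideal_x2_subset_sq_deriv_ideal[OF assms(1)], of D]
  by (simp add: trunc_deg_id[OF assms(2)])


section \<open>The lowering substitution\<close>

text \<open>\<open>lower\<close> is the ring homomorphism \<open>k{x} \<rightarrow> k{x}[z]\<close> with \<open>x\<^sub>i \<mapsto> x\<^sub>i - i x\<^sub>i\<^sub>-\<^sub>1 z\<close>.
  It maps \<open>sq_deriv n\<close> to \<open>q\<^sub>n - 2n q\<^sub>n\<^sub>-\<^sub>1 z + n(n-1) q\<^sub>n\<^sub>-\<^sub>2 z\<^sup>2\<close> (with \<open>q\<^sub>n = sq_deriv n\<close>),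
  so it maps \<open>[x\<^sup>2]\<close> into \<open>[x\<^sup>2][z]\<close>.\<close>

definition lower_var :: "nat \<Rightarrow> 'k::comm_ring_1 dpoly poly" where
  "lower_var i = [:dvar i, - (of_nat i * dvar (i - 1)):]"

abbreviation lower :: "'k::comm_ring_1 dpoly \<Rightarrow> 'k dpoly poly" where
  "lower \<equiv> dsubst lower_var"

lemma coeff_lower_var:
  "coeff (lower_var i) 0 = dvar i"
  "coeff (lower_var i) (Suc 0) = - (of_nat i * dvar (i - 1))"
  "coeff (lower_var i) (Suc (Suc k)) = 0"
  by (simp_all add: lower_var_def)

lemma coeff_0_lower: "coeff (lower p) 0 = p"
  by (rule coeff_0_dsubst) (simp add: coeff_lower_var)

lemma degree_lower_le: "\<forall>m\<in>Poly_Mapping.keys p. total_degree m \<le> d \<Longrightarrow> degree (lower p) \<le> d"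
  by (rule degree_dsubst_le) (simp add: lower_var_def)

lemma coeff_of_nat_mult: "coeff (of_nat c * p) k = of_nat c * coeff p k"
  by (simp add: of_nat_poly)

lemma lower_sq_deriv:
  "lower (sq_deriv n) = (\<Sum>i\<le>n. of_nat (n choose i) * (lower_var i * lower_var (n - i)))"
  by (simp add: sq_deriv_def dsubst_sum dsubst_mult dsubst_of_nat dsubst_dvar)

lemma coeff_lower_var_mult:
  "coeff (lower_var a * lower_var b) 1
    = - (of_nat b * (dvar a * dvar (b - 1))) - of_nat a * (dvar (a - 1) * dvar b)"
  "coeff (lower_var a * lower_var b) 2 = of_nat a * (of_nat b * (dvar (a - 1) * dvar (b - 1)))"
  by (simp_all add: coeff_mult lower_var_def numeral_2_eq_2 algebra_simps)

lemma coeff_1_lower_sq_deriv: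
  "coeff (lower (sq_deriv n)) 1 = - (of_nat n * sq_deriv (n - 1)) - of_nat n * sq_deriv (n - 1)"
proof -
  have "coeff (lower (sq_deriv n)) 1 = (\<Sum>i\<le>n. of_nat (n choose i) * (- (of_nat (n - i)
      * (dvar i * dvar (n - i - 1))) - of_nat i * (dvar (i - 1) * dvar (n - i))))"
    by (simp only: lower_sq_deriv coeff_sum coeff_of_nat_mult coeff_lower_var_mult)
  also have "\<dots> = - (\<Sum>i\<le>n. of_nat (n choose i) * of_nat (n - i) * (dvar i * dvar (n - i - 1)))
      - (\<Sum>i\<le>n. of_nat (n choose i) * of_nat i * (dvar (i - 1) * dvar (n - i)))"
    by (simp only: right_diff_distrib mult_minus_right mult.assoc sum_subtractf sum_negf)
  also have "\<dots> = - (of_nat n * sq_deriv (n - 1)) - of_nat n * sq_deriv (n - 1)"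
    unfolding sq_deriv_def
    by (simp only: sum_binomial_mult_index[where f = "\<lambda>a b. dvar a * dvar b"]
        sum_binomial_mult_coindex[where f = "\<lambda>a b. dvar a * dvar b"])
  finally show ?thesis .
qed

lemma coeff_2_lower_sq_deriv:
  "coeff (lower (sq_deriv n)) 2 = of_nat n * (of_nat (n - 1) * sq_deriv (n - 1 - 1))"
proof -
  have index: "(\<Sum>i\<le>n. of_nat (n choose i) * of_nat i * (of_nat (n - i) * (dvar (i - 1) * dvar (n - i - 1))))
     = of_nat n * (\<Sum>i\<le>n - 1. of_nat (n - 1 choose i) * (of_nat (n - 1 - i) * (dvar i * dvar (n - 1 - i - 1))))"
    by (rule sum_binomial_mult_index[where f = "\<lambda>a b. of_nat b * (dvar a * dvar (b - 1))"])
  have coindex: "(\<Sum>i\<le>n - 1. of_nat (n - 1 choose i) * of_nat (n - 1 - i) * (dvar i * dvar (n - 1 - i - 1)))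
     = of_nat (n - 1) * sq_deriv (n - 1 - 1)"
    unfolding sq_deriv_def by (rule sum_binomial_mult_coindex[where f = "\<lambda>a b. dvar a * dvar b"])
  have "coeff (lower (sq_deriv n)) 2 = (\<Sum>i\<le>n. of_nat (n choose i)
      * (of_nat i * (of_nat (n - i) * (dvar (i - 1) * dvar (n - i - 1)))))"
    by (simp only: lower_sq_deriv coeff_sum coeff_of_nat_mult coeff_lower_var_mult)
  also have "\<dots> = of_nat n * (\<Sum>i\<le>n - 1. of_nat (n - 1 choose i)
      * (of_nat (n - 1 - i) * (dvar i * dvar (n - 1 - i - 1))))"
    unfolding index[symmetric] by (simp only: mult.assoc)
  also have "\<dots> = of_nat n * (of_nat (n - 1) * sq_deriv (n - 1 - 1))"
    unfolding coindex[symmetric] by (simp only: mult.assoc)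
  finally show ?thesis .
qed

lemma degree_lower_sq_deriv_le: "degree (lower (sq_deriv n :: 'k::comm_ring_1 dpoly)) \<le> 2"
  by (rule degree_lower_le) (simp add: total_degree_keys_sq_deriv)

lemma coeff_lower_sq_deriv_in_dideal_x2: "coeff (lower (sq_deriv n)) b \<in> dideal_x2"
proof -
  consider "b = 0" | "b = 1" | "b = 2" | "b > 2" by linarith
  then show ?thesis
  proof cases
    case 4
    then have "coeff (lower (sq_deriv n :: 'a dpoly)) b = 0"
      by (intro coeff_eq_0 le_less_trans[OF degree_lower_sq_deriv_le])
    then show ?thesis using dideal_x2.zero by simp
  next
    case 1
    then show ?thesis by (simp add: coeff_0_lower sq_deriv_in_dideal_x2)
  next
    case 2
    have "- (of_nat n * sq_deriv (n - 1)) - of_nat n * sq_deriv (n - 1) \<in> dideal_x2"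
      by (intro dideal_x2_diff dideal_x2_uminus dideal_x2_mult sq_deriv_in_dideal_x2)
    then show ?thesis unfolding 2 coeff_1_lower_sq_deriv .
  next
    case 3
    then show ?thesis
      by (simp only: coeff_2_lower_sq_deriv dideal_x2_mult sq_deriv_in_dideal_x2)
  qed
qed

lemma lower_dpartial_sq_deriv:
  "lower (dpartial j (sq_deriv n :: 'k::comm_ring_1 dpoly))
    = of_nat (2 * (n choose j)) * lower_var (n - j)"
proof -
  have "dpartial j (sq_deriv n :: 'k dpoly) = (\<Sum>i\<le>n. of_nat (n choose i)
      * ((if i = j then 1 else 0) * dvar (n - i) + dvar i * (if n - i = j then 1 else 0)))"
    by (simp add: sq_deriv_def dpartial_sum dpartial_mult dpartial_of_nat dpartial_dvar)
  also have "\<dots> = (\<Sum>i\<le>n. if i = j then of_nat (n choose i) * dvar (n - i) else 0)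
      + (\<Sum>i\<le>n. if i = n - j \<and> j \<le> n then of_nat (n choose i) * dvar i else 0)"
    unfolding sum.distrib[symmetric] by (rule sum.cong[OF refl]) auto
  also have "\<dots> = of_nat (2 * (n choose j)) * dvar (n - j)"
    by (simp add: sum.delta binomial_symmetric[symmetric] binomial_eq_0 algebra_simps)
  finally show ?thesis
    by (simp only: dsubst_mult dsubst_of_nat dsubst_dvar)
qed


section \<open>Partial derivatives preserve \<open>[x\<^sup>2]\<close> in a window\<close>

text \<open>\<open>lower_jet K\<close> is a derivation along \<open>lower\<close> whose
  coefficients of \<open>z, \<dots>, z\<^sup>K\<close> vanish on every \<open>sq_deriv n\<close>; hence its coefficient of \<open>z\<^sup>K\<close>
  maps low-degree elements of \<open>[x\<^sup>2]\<close> into \<open>[x\<^sup>2]\<close>.\<close>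

definition lower_jet :: "nat \<Rightarrow> 'k::comm_ring_1 dpoly \<Rightarrow> 'k dpoly poly" where
  "lower_jet K p = (\<Sum>j\<le>K. monom (of_nat (fact j)) j * lower (dpartial j p))"

lemma lower_jet_add: "lower_jet K (p + q) = lower_jet K p + lower_jet K q"
  by (simp add: lower_jet_def dpartial_add dsubst_add distrib_left sum.distrib)

lemma lower_jet_mult: "lower_jet K (h * q) = lower_jet K h * lower q + lower h * lower_jet K q"
  unfolding lower_jet_def
  by (simp add: dpartial_mult dsubst_add dsubst_mult algebra_simps sum.distrib
      sum_distrib_left sum_distrib_right)

lemma coeff_lower_jet:
  assumes "r \<le> K"
  shows "coeff (lower_jet K p) r = (\<Sum>j\<le>r. of_nat (fact j) * coeff (lower (dpartial j p)) (r - j))"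
proof -
  have "coeff (lower_jet K p) r
      = (\<Sum>j\<le>K. if r < j then 0 else of_nat (fact j) * coeff (lower (dpartial j p)) (r - j))"
    by (simp add: lower_jet_def coeff_sum coeff_monom_mult)
  also have "\<dots> = (\<Sum>j\<le>r. if r < j then 0 else of_nat (fact j) * coeff (lower (dpartial j p)) (r - j))"
    using assms by (intro sum.mono_neutral_right) auto
  finally show ?thesis by simp
qed

lemma fact_Suc_mult_binomial_Suc: "fact (Suc s) * (n choose Suc s) = fact s * (n choose s) * (n - s)"
proof -
  have "Suc s * (n choose Suc s) = (n - s) * (n choose s)"
    using times_binomial_minus1_eq[of "Suc s" n] binomial_absorb_comp[of n s] by simp
  have "fact (Suc s) * (n choose Suc s) = fact s * (Suc s * (n choose Suc s))"
    by (simp only: fact_Suc of_nat_id mult.commute mult.left_commute)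
  also have "\<dots> = fact s * (n choose s) * (n - s)"
    by (simp only: \<open>Suc s * (n choose Suc s) = (n - s) * (n choose s)\<close> mult.commute mult.left_commute)
  finally show ?thesis .
qed

lemma coeff_lower_jet_sq_deriv:
  assumes "0 < r" "r \<le> K"
  shows "coeff (lower_jet K (sq_deriv n :: 'k::comm_ring_1 dpoly)) r = 0"
proof -
  obtain s where r: "r = Suc s" using assms(1) by (metis gr0_conv_Suc)
  let ?c = "\<lambda>j. of_nat (fact j) * coeff (lower (dpartial j (sq_deriv n :: 'k dpoly))) (Suc s - j)"
  have low: "?c j = 0" if "j < s" for j
  proof -
    have "Suc s - j = Suc (Suc (s - j - 1))" using that by simp
    then show ?thesis
      by (simp only: lower_dpartial_sq_deriv coeff_of_nat_mult coeff_lower_var mult_zero_right)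
  qed
  have "?c (Suc s) = of_nat (fact (Suc s)) * (of_nat (2 * (n choose Suc s)) * dvar (n - Suc s))"
    by (simp only: diff_self_eq_0 lower_dpartial_sq_deriv coeff_of_nat_mult coeff_lower_var)
  also have "\<dots> = of_nat (fact (Suc s) * (n choose Suc s)) * (2 * dvar (n - Suc s))"
    by (simp add: algebra_simps)
  finally have c_Suc: "?c (Suc s) = of_nat (fact s * (n choose s) * (n - s)) * (2 * dvar (n - Suc s))"
    by (simp only: fact_Suc_mult_binomial_Suc)
  have "Suc s - s = Suc 0" "n - s - 1 = n - Suc s" by simp_all
  then have "?c s = of_nat (fact s) * (of_nat (2 * (n choose s)) * - (of_nat (n - s) * dvar (n - Suc s)))"
    by (simp only: lower_dpartial_sq_deriv coeff_of_nat_mult coeff_lower_var)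
  also have "\<dots> = - (of_nat (fact s * (n choose s) * (n - s)) * (2 * dvar (n - Suc s)))"
    by (simp only: of_nat_mult of_nat_numeral mult_minus_right mult.assoc mult.commute
        mult.left_commute)
  finally have c_s: "?c s = - (of_nat (fact s * (n choose s) * (n - s)) * (2 * dvar (n - Suc s)))" .
  have top: "?c (Suc s) + ?c s = 0"
    unfolding c_Suc c_s by simp
  have "{..Suc s} = insert (Suc s) (insert s {..<s})" by auto
  then have "(\<Sum>j\<le>Suc s. ?c j) = ?c (Suc s) + ?c s + (\<Sum>j<s. ?c j)"
    by (simp add: add.assoc)
  also have "\<dots> = 0" using low top by simp
  finally show ?thesis
    using assms by (simp add: coeff_lower_jet r)
qed

lemma coeff_lower_eq_0:
  assumes "\<forall>m\<in>Poly_Mapping.keys h. total_degree m < K"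
  shows "coeff (lower h) K = 0"
proof (cases "K = 0")
  case True
  with assms have "h = 0" by (simp flip: keys_eq_empty)
  then show ?thesis by simp
next
  case False
  have "degree (lower h) \<le> K - 1" using assms by (intro degree_lower_le) auto
  then show ?thesis using False by (intro coeff_eq_0) linarith
qed

lemma coeff_lower_jet_mult_sq_deriv_in_dideal_x2:
  assumes "\<forall>m\<in>Poly_Mapping.keys h. total_degree m < K"
  shows "coeff (lower_jet K (h * sq_deriv n)) K \<in> dideal_x2"
proof -
  have "coeff (lower h * lower_jet K (sq_deriv n)) K = 0"
    unfolding coeff_mult
  proof (intro sum.neutral ballI)
    fix i assume "i \<in> {..K}"
    then consider "i = K" | "0 < K - i" "K - i \<le> K" by fastforce
    then show "coeff (lower h) i * coeff (lower_jet K (sq_deriv n)) (K - i) = 0"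
      by cases (simp_all add: coeff_lower_eq_0[OF assms] coeff_lower_jet_sq_deriv)
  qed
  moreover have "coeff (lower_jet K h * lower (sq_deriv n)) K \<in> dideal_x2"
    unfolding coeff_mult
    by (intro dideal_x2_sum dideal_x2_mult coeff_lower_sq_deriv_in_dideal_x2) simp
  ultimately show ?thesis
    by (simp add: lower_jet_mult)
qed

lemma coeff_lower_jet_in_dideal_x2:
  assumes "p \<in> dideal_x2" "\<forall>m\<in>Poly_Mapping.keys p. total_degree m \<le> D" "D \<le> K + 1"
  shows "coeff (lower_jet K p) K \<in> dideal_x2"
  using dideal_x2_in_sq_deriv_ideal_deg[OF assms(1,2)]
proof (induction rule: sq_deriv_ideal_deg.induct)
  case zero
  then show ?case by (simp add: lower_jet_def dpartial_def dpoly_der_def dideal_x2.zero)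
next
  case (add_mult p h n)
  have "coeff (lower_jet K (h * sq_deriv n)) K \<in> dideal_x2"
    using add_mult.hyps(2) assms(3) by (intro coeff_lower_jet_mult_sq_deriv_in_dideal_x2) fastforce
  then show ?case
    using add_mult.IH by (simp add: lower_jet_add dideal_x2.add)
qed

lemma coeff_lower_jet_eq_dpartial:
  assumes deg: "\<forall>m\<in>Poly_Mapping.keys p. total_degree m \<le> D"
    and gap: "\<forall>m\<in>Poly_Mapping.keys p. \<forall>i\<in>Poly_Mapping.keys m. i < K \<longrightarrow> i + D \<le> K"
  shows "coeff (lower_jet K p) K = of_nat (fact K) * dpartial K p"
proof -
  have low: "coeff (lower (dpartial j p)) (K - j) = 0" if "j < K" for j
  proof (cases "dpartial j p = 0")
    case False
    then obtain m' where "m' \<in> Poly_Mapping.keys (dpartial j p)"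
      by (metis all_not_in_conv keys_eq_empty)
    then obtain m where "m \<in> Poly_Mapping.keys p" "j \<in> Poly_Mapping.keys m"
      by (rule keys_dpartial)
    then have "j + D \<le> K" "1 \<le> D"
      using gap that deg total_degree_diff_single(2) by fastforce+
    moreover have "\<forall>m'\<in>Poly_Mapping.keys (dpartial j p). total_degree m' \<le> D - 1"
      by (metis keys_dpartial deg total_degree_diff_single(1) diff_le_mono)
    ultimately show ?thesis
      by (intro coeff_eq_0 le_less_trans[OF degree_lower_le]) auto
  qed simp
  have "{..K} = insert K {..<K}" by auto
  then have "coeff (lower_jet K p) K = of_nat (fact K) * coeff (lower (dpartial K p)) 0
      + (\<Sum>j<K. of_nat (fact j) * coeff (lower (dpartial j p)) (K - j))"
    by (simp add: coeff_lower_jet)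
  then show ?thesis
    using low by (simp add: coeff_0_lower)
qed

theorem fact_mult_dpartial_in_dideal_x2:
  assumes "p \<in> dideal_x2"
    and "\<forall>m\<in>Poly_Mapping.keys p. total_degree m \<le> D"
    and "\<forall>m\<in>Poly_Mapping.keys p. \<forall>i\<in>Poly_Mapping.keys m. i < K \<longrightarrow> i + D \<le> K"
    and "D \<le> K + 1"
  shows "of_nat (fact K) * dpartial K p \<in> dideal_x2"
  using coeff_lower_jet_in_dideal_x2[OF assms(1,2,4)] coeff_lower_jet_eq_dpartial[OF assms(2,3)]
  by simp


section \<open>Separating monomials in high variables\<close>

lemma keys_sum_mult_dmonom:
  assumes "M \<in> Poly_Mapping.keys (\<Sum>s\<in>S. c s * dmonom (H s) :: 'k::comm_ring_1 dpoly)"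
  obtains s m where "s \<in> S" "m \<in> Poly_Mapping.keys (c s)" "M = m + H s"
proof -
  obtain s where s: "s \<in> S" "M \<in> Poly_Mapping.keys (c s * dmonom (H s))"
    using subsetD[OF keys_sum assms] by blast
  then have "M \<in> (\<lambda>m. m + H s) ` Poly_Mapping.keys (c s)"
    using keys_mult_dmonom by blast
  then show ?thesis
    using s(1) that by blast
qed

lemma dpartial_sum_mult_dmonom:
  fixes c :: "'s \<Rightarrow> 'k::comm_ring_1 dpoly"
  assumes "finite S" "\<forall>s\<in>S. \<forall>m\<in>Poly_Mapping.keys (c s). K \<notin> Poly_Mapping.keys m"
  shows "dpartial K (\<Sum>s\<in>S. c s * dmonom (H s))
    = (\<Sum>s\<in>{s\<in>S. K \<in> Poly_Mapping.keys (H s)}.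
        dconst (of_nat (Poly_Mapping.lookup (H s) K)) * c s * dmonom (H s - Poly_Mapping.single K 1))"
proof -
  have "dpartial K (\<Sum>s\<in>S. c s * dmonom (H s)) = (\<Sum>s\<in>S.
      dconst (of_nat (Poly_Mapping.lookup (H s) K)) * c s * dmonom (H s - Poly_Mapping.single K 1))"
    using assms(2)
    by (simp add: dpartial_sum[OF assms(1)] dpartial_mult dpartial_single dpartial_eq_0_if_not_in_keys
        mult_ac)
  also have "\<dots> = (\<Sum>s\<in>{s\<in>S. K \<in> Poly_Mapping.keys (H s)}.
      dconst (of_nat (Poly_Mapping.lookup (H s) K)) * c s * dmonom (H s - Poly_Mapping.single K 1))"
    using assms(1) by (intro sum.mono_neutral_right) (auto simp: in_keys_iff)
  finally show ?thesis .
qed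

lemma fact_mult_dpartial_sum_mult_dmonom_in_dideal_x2:
  fixes c :: "'s \<Rightarrow> 'k::field_char_0 dpoly"
  assumes "finite S"
    and low: "\<forall>s\<in>S. \<forall>m\<in>Poly_Mapping.keys (c s). \<forall>i\<in>Poly_Mapping.keys m. i < L"
    and high: "\<forall>s\<in>S. \<forall>i\<in>Poly_Mapping.keys (H s). K \<le> i"
    and degs: "\<forall>s\<in>S. \<forall>m\<in>Poly_Mapping.keys (c s). total_degree m + total_degree (H s) \<le> D"
    and "L + D \<le> K"
    and "(\<Sum>s\<in>S. c s * dmonom (H s)) \<in> dideal_x2"
  shows "(\<Sum>s\<in>{s\<in>S. K \<in> Poly_Mapping.keys (H s)}. dconst (of_nat (fact K * Poly_Mapping.lookup (H s) K))
    * c s * dmonom (H s - Poly_Mapping.single K 1)) \<in> dideal_x2"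
proof -
  let ?p = "\<Sum>s\<in>S. c s * dmonom (H s)"
  have "\<forall>s\<in>S. \<forall>m\<in>Poly_Mapping.keys (c s). K \<notin> Poly_Mapping.keys m"
    using low assms(5) by fastforce
  then have "of_nat (fact K) * dpartial K ?p = (\<Sum>s\<in>{s\<in>S. K \<in> Poly_Mapping.keys (H s)}.
      of_nat (fact K) * (dconst (of_nat (Poly_Mapping.lookup (H s) K)) * c s
        * dmonom (H s - Poly_Mapping.single K 1)))"
    by (simp only: dpartial_sum_mult_dmonom[OF assms(1)] sum_distrib_left)
  also have "\<dots> = (\<Sum>s\<in>{s\<in>S. K \<in> Poly_Mapping.keys (H s)}.
      dconst (of_nat (fact K * Poly_Mapping.lookup (H s) K)) * c s * dmonom (H s - Poly_Mapping.single K 1))"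
    by (intro sum.cong refl) (simp add: of_nat_eq_dconst dconst_mult mult_ac)
  finally have "of_nat (fact K) * dpartial K ?p = \<dots>" .
  moreover have "of_nat (fact K) * dpartial K ?p \<in> dideal_x2"
  proof (rule fact_mult_dpartial_in_dideal_x2[OF assms(6)])
    show "\<forall>M\<in>Poly_Mapping.keys ?p. total_degree M \<le> D"
      using degs by (auto simp: total_degree_add elim!: keys_sum_mult_dmonom)
    show "\<forall>M\<in>Poly_Mapping.keys ?p. \<forall>i\<in>Poly_Mapping.keys M. i < K \<longrightarrow> i + D \<le> K"
      using low high assms(5) by (fastforce simp: keys_add_nat elim!: keys_sum_mult_dmonom)
    show "D \<le> K + 1" using assms(5) by linarith
  qed
  ultimately show ?thesis by simp
qed

lemma inj_on_diff_single:
  fixes H :: "'s \<Rightarrow> ('a \<Rightarrow>\<^sub>0 nat)"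
  assumes "inj_on H S" "\<forall>s\<in>S. K \<in> Poly_Mapping.keys (H s)"
  shows "inj_on (\<lambda>s. H s - Poly_Mapping.single K 1) S"
proof (rule inj_onI)
  fix s t assume st: "s \<in> S" "t \<in> S" "H s - Poly_Mapping.single K 1 = H t - Poly_Mapping.single K 1"
  have "H s = (H s - Poly_Mapping.single K 1) + Poly_Mapping.single K 1"
    using assms(2) st(1) by (intro diff_single_add_single[symmetric]) blast
  also have "\<dots> = (H t - Poly_Mapping.single K 1) + Poly_Mapping.single K 1"
    by (simp only: st(3))
  also have "\<dots> = H t"
    using assms(2) st(2) by (intro diff_single_add_single) blast
  finally show "s = t" using inj_onD[OF assms(1)] st(1,2) by blast
qed

lemma sum_mult_dmonom_notin_dideal_x2:
  fixes c :: "'s \<Rightarrow> 'k::field_char_0 dpoly" and H :: "'s \<Rightarrow> (nat \<Rightarrow>\<^sub>0 nat)"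
  assumes "finite S" "S \<noteq> {}" "inj_on H S"
    and "\<forall>s\<in>S. c s \<notin> dideal_x2"
    and "\<forall>s\<in>S. \<forall>m\<in>Poly_Mapping.keys (c s). \<forall>i\<in>Poly_Mapping.keys m. i < L"
    and "\<forall>s\<in>S. \<forall>i\<in>Poly_Mapping.keys (H s). B \<le> i"
    and "\<forall>s\<in>S. \<forall>m\<in>Poly_Mapping.keys (c s). total_degree m + total_degree (H s) \<le> D"
    and "L + D \<le> B"
  shows "(\<Sum>s\<in>S. c s * dmonom (H s)) \<notin> dideal_x2"
  using assms(1-7)
proof (induction "\<Sum>s\<in>S. total_degree (H s)" arbitrary: S c H rule: less_induct)
  case less
  note fin = less.prems(1) and ne = less.prems(2) and inj = less.prems(3) and notin = less.prems(4)
    and low = less.prems(5) and high = less.prems(6) and degs = less.prems(7)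
  show ?case
  proof (cases "\<forall>s\<in>S. H s = 0")
    case True
    obtain s0 where s0: "s0 \<in> S" using ne by blast
    have "x = s0" if "x \<in> S" for x
      using inj_onD[OF inj _ that s0] True that s0 by simp
    then have "S = {s0}" using s0 by blast
    then show ?thesis using notin True by simp
  next
    case False
    define K where "K = Min (\<Union>s\<in>S. Poly_Mapping.keys (H s))"
    have "K \<in> (\<Union>s\<in>S. Poly_Mapping.keys (H s))" unfolding K_def using fin False by (intro Min_in) auto
    then obtain s0 where s0: "s0 \<in> S" "K \<in> Poly_Mapping.keys (H s0)" by blast
    have K_min: "\<forall>s\<in>S. \<forall>i\<in>Poly_Mapping.keys (H s). K \<le> i"
      unfolding K_def using fin by (auto intro: Min_le)
    have "L + D \<le> K" using s0 high assms(8) by fastforce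
    define S' where "S' = {s\<in>S. K \<in> Poly_Mapping.keys (H s)}"
    define c' where "c' s = dconst (of_nat (fact K * Poly_Mapping.lookup (H s) K)) * c s" for s
    define H' where "H' s = H s - Poly_Mapping.single K 1" for s
    have S'S: "S' \<subseteq> S" and fin': "finite S'" and ne': "S' \<noteq> {}"
      using fin s0 by (auto simp: S'_def intro: finite_subset)
    have deg_H': "total_degree (H' s) = total_degree (H s) - 1" "1 \<le> total_degree (H s)"
      if "s \<in> S'" for s
      using that total_degree_diff_single[of K "H s"] by (auto simp: S'_def H'_def)
    have keys_c': "m \<in> Poly_Mapping.keys (c s)" if "m \<in> Poly_Mapping.keys (c' s)" for s m
      using that keys_dconst_mult unfolding c'_def by blast
    have "(\<Sum>s\<in>S'. c' s * dmonom (H' s)) \<notin> dideal_x2"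
    proof (rule less.hyps[OF _ fin' ne'])
      show "inj_on H' S'"
        unfolding H'_def using inj_on_subset[OF inj S'S] by (rule inj_on_diff_single) (simp add: S'_def)
      have "(of_nat (fact K * Poly_Mapping.lookup (H s) K) :: 'k) \<noteq> 0" if "s \<in> S'" for s
        using that by (simp add: S'_def in_keys_iff)
      then show "\<forall>s\<in>S'. c' s \<notin> dideal_x2"
        using dideal_x2_dconst_mult_cancel notin S'S unfolding c'_def by blast
      show "\<forall>s\<in>S'. \<forall>m\<in>Poly_Mapping.keys (c' s). \<forall>i\<in>Poly_Mapping.keys m. i < L"
        using low S'S keys_c' by blast
      show "\<forall>s\<in>S'. \<forall>i\<in>Poly_Mapping.keys (H' s). B \<le> i"
        using high S'S by (auto simp: H'_def in_keys_iff lookup_minus)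
      show "\<forall>s\<in>S'. \<forall>m\<in>Poly_Mapping.keys (c' s). total_degree m + total_degree (H' s) \<le> D"
      proof (intro ballI)
        fix s m assume s: "s \<in> S'" and "m \<in> Poly_Mapping.keys (c' s)"
        then have "total_degree m + total_degree (H s) \<le> D"
          using degs S'S keys_c' by blast
        then show "total_degree m + total_degree (H' s) \<le> D"
          using deg_H'[OF s] by linarith
      qed
      have "(\<Sum>s\<in>S'. total_degree (H' s)) < (\<Sum>s\<in>S'. total_degree (H s))"
        using fin' ne' deg_H' by (intro sum_strict_mono) fastforce+
      also have "\<dots> \<le> (\<Sum>s\<in>S. total_degree (H s))"
        using fin S'S by (intro sum_mono2) auto
      finally show "(\<Sum>s\<in>S'. total_degree (H' s)) < (\<Sum>s\<in>S. total_degree (H s))" .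
    qed
    moreover have "(\<Sum>s\<in>S'. c' s * dmonom (H' s)) \<in> dideal_x2"
      if "(\<Sum>s\<in>S. c s * dmonom (H s)) \<in> dideal_x2"
      using fact_mult_dpartial_sum_mult_dmonom_in_dideal_x2[OF fin low K_min degs \<open>L + D \<le> K\<close> that]
      unfolding S'_def c'_def H'_def by (simp only: mult.assoc)
    ultimately show ?thesis by blast
  qed
qed


section \<open>Substituting \<open>x\<^sub>N\<^sub>i\<close> for \<open>t\<^sub>i\<close>\<close>

text \<open>Under \<open>t\<^sub>i \<mapsto> x\<^sub>N\<^sub>i\<close> the variable \<open>t\<^sub>i\<^sub>,\<^sub>j\<close> becomes \<open>x\<^sub>N\<^sub>i\<^sub>+\<^sub>j\<close>, so a monomial \<open>m\<close> in the \<open>t\<^sub>i\<^sub>,\<^sub>j\<close> becomes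
  the monomial \<open>spread_monom N m\<close>.\<close>

definition spread_monom :: "nat \<Rightarrow> ((nat \<times> nat) \<Rightarrow>\<^sub>0 nat) \<Rightarrow> (nat \<Rightarrow>\<^sub>0 nat)" where
  "spread_monom N m = (\<Sum>v\<in>Poly_Mapping.keys m. Poly_Mapping.single (N * fst v + snd v) (Poly_Mapping.lookup m v))"

lemma deval_dvar_scaled:
  "deval f (\<lambda>i. dvar (N * i))
    = (\<Sum>m\<in>Poly_Mapping.keys f. Poly_Mapping.lookup f m * dmonom (spread_monom N m))"
  unfolding deval_def spread_monom_def
  by (intro sum.cong refl arg_cong[where f = "(*) _"])
    (simp add: funpow_dderiv_dvar dvar_power prod_dmonom)

lemma lookup_spread_monom:
  assumes "\<forall>w\<in>Poly_Mapping.keys m. snd w < N" "snd v < N"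
  shows "Poly_Mapping.lookup (spread_monom N m) (N * fst v + snd v) = Poly_Mapping.lookup m v"
proof -
  have "N * fst w + snd w = N * fst v + snd v \<longleftrightarrow> w = v" if "w \<in> Poly_Mapping.keys m" for w
  proof
    assume "N * fst w + snd w = N * fst v + snd v"
    then have "(N * fst w + snd w) div N = (N * fst v + snd v) div N"
      "(N * fst w + snd w) mod N = (N * fst v + snd v) mod N" by simp_all
    then show "w = v"
      using assms that by (simp add: prod_eq_iff)
  qed simp
  then have "Poly_Mapping.lookup (spread_monom N m) (N * fst v + snd v)
      = (\<Sum>w\<in>Poly_Mapping.keys m. if w = v then Poly_Mapping.lookup m w else 0)"
    unfolding spread_monom_def lookup_sum by (intro sum.cong refl) (simp add: lookup_single when_def)
  also have "\<dots> = Poly_Mapping.lookup m v"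
    by (simp add: sum.delta' in_keys_iff)
  finally show ?thesis .
qed

lemma keys_spread_monom:
  assumes "i \<in> Poly_Mapping.keys (spread_monom N m)"
  obtains v where "v \<in> Poly_Mapping.keys m" "i = N * fst v + snd v"
proof -
  have "i \<in> (\<Union>v\<in>Poly_Mapping.keys m.
      Poly_Mapping.keys (Poly_Mapping.single (N * fst v + snd v) (Poly_Mapping.lookup m v)))"
    using subsetD[OF keys_sum assms[unfolded spread_monom_def]] .
  then show ?thesis
    using that by (auto split: if_splits)
qed

lemma total_degree_spread_monom: "total_degree (spread_monom N m) = total_degree m"
  unfolding spread_monom_def total_degree_sum[OF finite_keys]
  by (simp only: total_degree_single) (simp add: total_degree_def)

lemma inj_on_spread_monom:
  assumes "\<forall>m\<in>A. \<forall>v\<in>Poly_Mapping.keys m. snd v < N"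
  shows "inj_on (spread_monom N) A"
proof (rule inj_onI, rule poly_mapping_eqI)
  fix m1 m2 v
  assume m: "m1 \<in> A" "m2 \<in> A" and eq: "spread_monom N m1 = spread_monom N m2"
  show "Poly_Mapping.lookup m1 v = Poly_Mapping.lookup m2 v"
  proof (cases "snd v < N")
    case True
    then show ?thesis
      using eq lookup_spread_monom[of m1 N v] lookup_spread_monom[of m2 N v] assms m by metis
  next
    case False
    then have "v \<notin> Poly_Mapping.keys m1" "v \<notin> Poly_Mapping.keys m2"
      using assms m by auto
    then show ?thesis by (simp add: in_keys_iff)
  qed
qed

lemma keys_spread_monom_ge:
  assumes "\<forall>v\<in>Poly_Mapping.keys m. 1 \<le> fst v" "i \<in> Poly_Mapping.keys (spread_monom N m)"
  shows "N \<le> i"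
proof -
  obtain v where "v \<in> Poly_Mapping.keys m" "i = N * fst v + snd v"
    using assms(2) by (rule keys_spread_monom)
  moreover from this have "1 \<le> fst v"
    using assms(1) by blast
  ultimately show ?thesis
    using mult_le_mono2[of 1 "fst v" N] by linarith
qed

lemma sum_notin_dideal_x2_subset:
  assumes "finite A" "G \<subseteq> A" "\<forall>a\<in>A - G. g a \<in> dideal_x2" "(\<Sum>a\<in>G. g a) \<notin> dideal_x2"
  shows "(\<Sum>a\<in>A. g a) \<notin> dideal_x2"
proof
  assume "(\<Sum>a\<in>A. g a) \<in> dideal_x2"
  moreover have "(\<Sum>a\<in>A - G. g a) \<in> dideal_x2"
    using assms(1,3) by (intro dideal_x2_sum) simp_all
  ultimately have "(\<Sum>a\<in>A. g a) - (\<Sum>a\<in>A - G. g a) \<in> dideal_x2"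
    by (rule dideal_x2_diff)
  then show False
    using assms(4) sum.subset_diff[OF assms(2,1), of g] by simp
qed

lemma deval_dvar_scaled_notin_dideal_x2:
  fixes f :: "'k::field_char_0 dpoly_over"
  assumes vars: "\<forall>m\<in>Poly_Mapping.keys f. \<forall>v\<in>Poly_Mapping.keys m. 1 \<le> fst v \<and> snd v < N"
    and coeff: "Poly_Mapping.lookup f m0 \<notin> dideal_x2"
    and low: "\<forall>m\<in>Poly_Mapping.keys f. \<forall>M\<in>Poly_Mapping.keys (Poly_Mapping.lookup f m).
      \<forall>i\<in>Poly_Mapping.keys M. i < L"
    and deg: "\<forall>m\<in>Poly_Mapping.keys f. \<forall>M\<in>Poly_Mapping.keys (Poly_Mapping.lookup f m).
      total_degree M + total_degree m \<le> D"
    and "L + D \<le> N"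
  shows "deval f (\<lambda>i. dvar (N * i)) \<notin> dideal_x2"
  unfolding deval_dvar_scaled
proof (rule sum_notin_dideal_x2_subset)
  define G where "G = {m \<in> Poly_Mapping.keys f. Poly_Mapping.lookup f m \<notin> dideal_x2}"
  show "G \<subseteq> Poly_Mapping.keys f" by (auto simp: G_def)
  then have "finite G" by (rule finite_subset) simp
  show "\<forall>m\<in>Poly_Mapping.keys f - G. Poly_Mapping.lookup f m * dmonom (spread_monom N m) \<in> dideal_x2"
    using dideal_x2_mult by (auto simp: G_def mult.commute[of "Poly_Mapping.lookup f _"])
  have "Poly_Mapping.lookup f m0 \<noteq> 0"
    using coeff dideal_x2.zero[where 'k = 'k] by (cases "Poly_Mapping.lookup f m0 = 0") simp_all
  then have "m0 \<in> G"
    using coeff by (simp add: G_def in_keys_iff)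
  moreover have "\<forall>m\<in>G. \<forall>i\<in>Poly_Mapping.keys (spread_monom N m). N \<le> i"
    using vars \<open>G \<subseteq> _\<close> keys_spread_monom_ge by (metis subsetD)
  ultimately show "(\<Sum>m\<in>G. Poly_Mapping.lookup f m * dmonom (spread_monom N m)) \<notin> dideal_x2"
    using \<open>finite G\<close> \<open>G \<subseteq> _\<close> vars low deg assms(5)
    by (intro sum_mult_dmonom_notin_dideal_x2[where L = L and B = N and D = D] inj_on_spread_monom)
      (auto simp: G_def total_degree_spread_monom)
qed simp

theorem lemma3:
  fixes f :: "'k::field_char_0 dpoly_over" and n :: nat
  assumes vars: "\<forall>m\<in>Poly_Mapping.keys f. \<forall>v\<in>Poly_Mapping.keys m. 1 \<le> fst v \<and> fst v \<le> n"
    and nonzero: "\<exists>m. \<not> D2_zero (Poly_Mapping.lookup f m)"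
  shows "\<exists>a. (\<forall>i\<in>{1..n}. a i \<in> kplus) \<and> \<not> D2_zero (deval f a)"
proof -
  obtain m0 where m0: "Poly_Mapping.lookup f m0 \<notin> dideal_x2"
    using nonzero by (auto simp: D2_zero_def)
  have "finite (\<Union>m\<in>Poly_Mapping.keys f. \<Union>M\<in>Poly_Mapping.keys (Poly_Mapping.lookup f m).
      Poly_Mapping.keys M)" by simp
  then obtain L where L: "\<forall>m\<in>Poly_Mapping.keys f. \<forall>M\<in>Poly_Mapping.keys (Poly_Mapping.lookup f m).
      \<forall>i\<in>Poly_Mapping.keys M. i < L"
    by (blast dest: finite_nat_bounded)
  have "finite ((\<lambda>(m, M). total_degree M + total_degree m)
      ` (SIGMA m:Poly_Mapping.keys f. Poly_Mapping.keys (Poly_Mapping.lookup f m)))" by simp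
  then obtain D where D: "\<forall>m\<in>Poly_Mapping.keys f. \<forall>M\<in>Poly_Mapping.keys (Poly_Mapping.lookup f m).
      total_degree M + total_degree m \<le> D"
    by (blast dest: finite_nat_bounded intro: less_imp_le)
  have "finite (snd ` (\<Union>m\<in>Poly_Mapping.keys f. Poly_Mapping.keys m))" by simp
  then obtain J where J: "\<forall>m\<in>Poly_Mapping.keys f. \<forall>v\<in>Poly_Mapping.keys m. snd v < J"
    by (blast dest: finite_nat_bounded)
  have "\<forall>m\<in>Poly_Mapping.keys f. \<forall>v\<in>Poly_Mapping.keys m. 1 \<le> fst v \<and> snd v < L + D + J"
    using vars J by (meson trans_less_add2)
  then have "deval f (\<lambda>i. dvar ((L + D + J) * i)) \<notin> dideal_x2"
    by (rule deval_dvar_scaled_notin_dideal_x2[OF _ m0 L D]) simp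
  then have "(\<forall>i\<in>{1..n}. dvar ((L + D + J) * i) \<in> kplus)
      \<and> \<not> D2_zero (deval f (\<lambda>i. dvar ((L + D + J) * i)))"
    by (simp add: D2_zero_def dvar_in_kplus)
  then show ?thesis
    by (intro exI[where x = "\<lambda>i. dvar ((L + D + J) * i)"])
qed

end
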